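(* The dcpo $\mathcal Q\mathbb R_\ell$ is not core-compact in its Scott topology.
   Context: The Sorgenfrey line $\mathbb R_\ell$ is $\mathbb R$ with the topology generated by the half-open intervals $[a,b[$, $a<b$. $\mathcal Q\mathbb R_\ell$ is the set of non-empty compact subsets of $\mathbb R_\ell$ ordered by reverse inclusion; it is a dcpo. A space is core-compact if its lattice of open sets is a continuous lattice. *)

theory Defs
  imports "HOL-Analysis.Analysis"
begin

definition sorgenfrey :: "real topology" where
  "sorgenfrey = topology_generated_by {{a..<b} | a b. a < b}"

definition QRl :: "real set set" where
  "QRl = {K. K \<noteq> {} \<and> compactin sorgenfrey K}"

definition Q_le :: "real set \<Rightarrow> real set \<Rightarrow> bool" where
  "Q_le K L \<longleftrightarrow> L \<subseteq> K"

definition directed_in :: "'a set \<Rightarrow> ('a \<Rightarrow> 'a \<Rightarrow> bool) \<Rightarrow> 'a set \<Rightarrow> bool" where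
  "directed_in P le D \<longleftrightarrow> D \<subseteq> P \<and> D \<noteq> {} \<and>
     (\<forall>x\<in>D. \<forall>y\<in>D. \<exists>z\<in>D. le x z \<and> le y z)"

definition is_lub_in :: "'a set \<Rightarrow> ('a \<Rightarrow> 'a \<Rightarrow> bool) \<Rightarrow> 'a set \<Rightarrow> 'a \<Rightarrow> bool" where
  "is_lub_in P le D s \<longleftrightarrow> s \<in> P \<and> (\<forall>d\<in>D. le d s) \<and>
     (\<forall>u\<in>P. (\<forall>d\<in>D. le d u) \<longrightarrow> le s u)"

definition scott_open :: "'a set \<Rightarrow> ('a \<Rightarrow> 'a \<Rightarrow> bool) \<Rightarrow> 'a set \<Rightarrow> bool" where
  "scott_open P le U \<longleftrightarrow> U \<subseteq> P \<and>
     (\<forall>x\<in>U. \<forall>y\<in>P. le x y \<longrightarrow> y \<in> U) \<and>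
     (\<forall>D s. directed_in P le D \<and> is_lub_in P le D s \<and> s \<in> U \<longrightarrow> D \<inter> U \<noteq> {})"

definition scott_topology :: "'a set \<Rightarrow> ('a \<Rightarrow> 'a \<Rightarrow> bool) \<Rightarrow> 'a topology" where
  "scott_topology P le = topology (scott_open P le)"

lemma istopology_scott_open: "istopology (scott_open P le)"
  unfolding istopology_def
proof (intro conjI allI impI)
  fix S T assume S: "scott_open P le S" and T: "scott_open P le T"
  show "scott_open P le (S \<inter> T)"
    unfolding scott_open_def
  proof (intro conjI allI impI ballI)
    show "S \<inter> T \<subseteq> P" using S unfolding scott_open_def by blast
  next
    fix x y assume "x \<in> S \<inter> T" "y \<in> P" "le x y"
    then show "y \<in> S \<inter> T" using S T unfolding scott_open_def by blast
  next
    fix D s assume a: "directed_in P le D \<and> is_lub_in P le D s \<and> s \<in> S \<inter> T"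
    then obtain d1 where d1: "d1 \<in> D" "d1 \<in> S" using S unfolding scott_open_def by blast
    from a obtain d2 where d2: "d2 \<in> D" "d2 \<in> T" using T unfolding scott_open_def by blast
    from a d1 d2 obtain z where z: "z \<in> D" "le d1 z" "le d2 z"
      unfolding directed_in_def by blast
    have "z \<in> P" using a z unfolding directed_in_def by blast
    then have "z \<in> S" "z \<in> T" using S T d1 d2 z unfolding scott_open_def by blast+
    then show "D \<inter> (S \<inter> T) \<noteq> {}" using z by blast
  qed
next
  fix K assume K: "\<forall>S\<in>K. scott_open P le S"
  show "scott_open P le (\<Union>K)"
    unfolding scott_open_def
  proof (intro conjI allI impI ballI)
    show "\<Union>K \<subseteq> P" using K unfolding scott_open_def by blast
  next
    fix x y assume "x \<in> \<Union>K" "y \<in> P" "le x y"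
    then show "y \<in> \<Union>K" using K unfolding scott_open_def by blast
  next
    fix D s assume a: "directed_in P le D \<and> is_lub_in P le D s \<and> s \<in> \<Union>K"
    then obtain U where "U \<in> K" "s \<in> U" by blast
    with a K have "D \<inter> U \<noteq> {}" unfolding scott_open_def by blast
    then show "D \<inter> \<Union>K \<noteq> {}" using \<open>U \<in> K\<close> by blast
  qed
qed

text \<open>Way-below relation in the lattice of open sets of X (sups are unions),
and core-compactness: the lattice of open sets is a continuous lattice.\<close>
definition open_way_below :: "'a topology \<Rightarrow> 'a set \<Rightarrow> 'a set \<Rightarrow> bool" where
  "open_way_below X U V \<longleftrightarrow> openin X U \<and> openin X V \<and>
     (\<forall>\<D>. \<D> \<noteq> {} \<and> (\<forall>W\<in>\<D>. openin X W) \<and>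
          (\<forall>A\<in>\<D>. \<forall>B\<in>\<D>. \<exists>C\<in>\<D>. A \<union> B \<subseteq> C) \<and> V \<subseteq> \<Union>\<D>
          \<longrightarrow> (\<exists>W\<in>\<D>. U \<subseteq> W))"

definition core_compact :: "'a topology \<Rightarrow> bool" where
  "core_compact X \<longleftrightarrow>
     (\<forall>V. openin X V \<longrightarrow> V = \<Union>{U. open_way_below X U V})"

end

theory Submission
  imports Defs
begin

(* Suppose the Scott topology on Q(R_l) were core-compact. Then {0} lies in some Scott-open U
   way below the top open set QRl. For every interval ]b,a[ the Scott-open sets
   {K. K \<inter> [t,a[ = {}}, t \<in> ]b,a[, form a directed cover of QRl (a Sorgenfrey-compact set
   cannot approach a from the left), so U lies in one of them: every member of U misses some
   point t of ]b,a[. Choosing such points y k in ]1/(k+2), 1/(k+1)[ gives a strictly decreasing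
   sequence tending to 0 and avoided by all members of U. But the tails {0} \<union> {y k | k \<ge> n}
   are Sorgenfrey-compact and form a directed family with supremum {0} \<in> U, so one of them
   lies in U, which is absurd. Scott-openness of the sets {K. K \<subseteq> W}, W open, is the
   well-filteredness of Hausdorff spaces. *)

lemma topspace_sorgenfrey [simp]: "topspace sorgenfrey = UNIV"
proof -
  have "x \<in> \<Union>{{a..<b} | a b. a < b}" for x :: real
  proof
    show "{x..<x+1} \<in> {{a..<b} | a b. a < b}" by force
  qed simp
  then show ?thesis unfolding sorgenfrey_def topology_generated_by_topspace by blast
qed

lemma openin_sorgenfrey_atLeastLessThan [intro]: "openin sorgenfrey {a..<b}"
proof (cases "a < b")
  case True
  then show ?thesis unfolding sorgenfrey_def by (intro topology_generated_by_Basis) blast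
qed simp

lemma openin_sorgenfrey_iff:
  "openin sorgenfrey S \<longleftrightarrow> (\<forall>x\<in>S. \<exists>e>0. {x..<x+e} \<subseteq> S)"
proof
  assume "openin sorgenfrey S"
  then have "generate_topology_on {{a..<b} | a b. a < (b::real)} S"
    unfolding sorgenfrey_def openin_topology_generated_by_iff .
  then show "\<forall>x\<in>S. \<exists>e>0. {x..<x+e} \<subseteq> S"
  proof (induction rule: generate_topology_on.induct)
    case (Int S T)
    show ?case
    proof
      fix x assume "x \<in> S \<inter> T"
      then obtain d e where "d > 0" "{x..<x+d} \<subseteq> S" "e > 0" "{x..<x+e} \<subseteq> T"
        using Int.IH by blast
      then show "\<exists>e>0. {x..<x+e} \<subseteq> S \<inter> T"
        by (intro exI[of _ "min d e"]) (auto simp: subset_iff)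
    qed
  next
    case (UN \<K>)
    show ?case
    proof
      fix x assume "x \<in> \<Union>\<K>"
      then obtain S where "S \<in> \<K>" "x \<in> S" by blast
      with UN.IH show "\<exists>e>0. {x..<x+e} \<subseteq> \<Union>\<K>" by blast
    qed
  next
    case (Basis S)
    then obtain a b where "S = {a..<b}" by blast
    then show ?case by (auto intro!: exI[of _ "b - x" for x])
  qed simp
next
  assume right_nbhds: "\<forall>x\<in>S. \<exists>e>0. {x..<x+e} \<subseteq> S"
  show "openin sorgenfrey S"
  proof (subst openin_subopen, intro ballI)
    fix x assume "x \<in> S"
    with right_nbhds obtain e where "e > 0" "{x..<x+e} \<subseteq> S" by blast
    then show "\<exists>T. openin sorgenfrey T \<and> x \<in> T \<and> T \<subseteq> S"
      by (intro exI[of _ "{x..<x+e}"]) auto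
  qed
qed

lemma closedin_sorgenfrey_atLeastLessThan: "closedin sorgenfrey {a..<b}"
proof -
  have "\<exists>e>0. {x..<x+e} \<subseteq> - {a..<b}" if "x \<notin> {a..<b}" for x
  proof (cases "x < a")
    case True
    then show ?thesis by (intro exI[of _ "a - x"]) auto
  next
    case False
    then show ?thesis using that by (intro exI[of _ 1]) auto
  qed
  then show ?thesis
    unfolding closedin_def openin_sorgenfrey_iff by (simp add: Compl_eq_Diff_UNIV[symmetric])
qed

lemma Hausdorff_space_sorgenfrey: "Hausdorff_space sorgenfrey"
  unfolding Hausdorff_space_def
proof (intro allI impI)
  fix x y :: real
  assume "x \<in> topspace sorgenfrey \<and> y \<in> topspace sorgenfrey \<and> x \<noteq> y"
  then consider "x < y" | "y < x" by fastforce
  then show "\<exists>U V. openin sorgenfrey U \<and> openin sorgenfrey V \<and> x \<in> U \<and> y \<in> V \<and> disjnt U V"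
  proof cases
    case 1
    then show ?thesis by (intro exI[of _ "{x..<y}"] exI[of _ "{y..<y+1}"]) (auto simp: disjnt_def)
  next
    case 2
    then show ?thesis by (intro exI[of _ "{x..<x+1}"] exI[of _ "{y..<x}"]) (auto simp: disjnt_def)
  qed
qed

lemma compactin_sorgenfrey_disjoint_left_of:
  assumes K: "compactin sorgenfrey K" and "b < a"
  shows "\<exists>t\<in>{b<..<a}. K \<inter> {t..<a} = {}"
proof -
  let ?I = "\<lambda>t. {t..<a}"
  have "\<Inter>(?I ` {b<..<a}) = {}"
  proof (rule equals0I)
    fix x assume x: "x \<in> \<Inter>(?I ` {b<..<a})"
    have in_I: "x \<in> {t..<a}" if "t \<in> {b<..<a}" for t
      using x that by blast
    have "x < a" using in_I[of "(a + b) / 2"] \<open>b < a\<close> by simp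
    show False
    proof (cases "x \<le> b")
      case True
      then show False using in_I[of "(a + b) / 2"] \<open>b < a\<close> by simp
    next
      case False
      then show False using in_I[of "(x + a) / 2"] \<open>x < a\<close> by simp
    qed
  qed
  moreover have "\<forall>C\<in>?I ` {b<..<a}. closedin sorgenfrey C"
    by (simp add: closedin_sorgenfrey_atLeastLessThan)
  moreover have "\<And>\<C>. \<forall>C\<in>\<C>. closedin sorgenfrey C \<Longrightarrow>
      \<forall>\<F>. finite \<F> \<and> \<F> \<subseteq> \<C> \<longrightarrow> K \<inter> \<Inter>\<F> \<noteq> {} \<Longrightarrow> K \<inter> \<Inter>\<C> \<noteq> {}"
    using K unfolding compactin_fip by blast
  ultimately obtain \<F> where "finite \<F>" "\<F> \<subseteq> ?I ` {b<..<a}" "K \<inter> \<Inter>\<F> = {}"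
    by (metis inf_bot_right)
  then obtain T where T: "finite T" "T \<subseteq> {b<..<a}" "K \<inter> \<Inter>(?I ` T) = {}"
    by (metis finite_subset_image)
  define t where "t = Max (insert ((a + b) / 2) T)"
  have "t \<in> {b<..<a}"
    unfolding t_def using T \<open>b < a\<close> by (intro subsetD[OF _ Max_in]) auto
  moreover have "{t..<a} \<subseteq> \<Inter>(?I ` T)"
    unfolding t_def using T(1) by auto
  ultimately show ?thesis using T(3) by blast
qed

lemma compactin_sorgenfrey_convergent_from_right:
  fixes f :: "nat \<Rightarrow> real"
  assumes lim: "f \<longlonglongrightarrow> x" and above: "\<And>n. x \<le> f n"
  shows "compactin sorgenfrey (insert x (range f))"
  unfolding compactin_def
proof (intro conjI allI impI)
  fix \<U> assume \<U>: "(\<forall>U\<in>\<U>. openin sorgenfrey U) \<and> insert x (range f) \<subseteq> \<Union>\<U>"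
  then obtain U0 where U0: "U0 \<in> \<U>" "x \<in> U0" by blast
  then obtain e where "e > 0" and e: "{x..<x+e} \<subseteq> U0"
    using \<U> openin_sorgenfrey_iff by blast
  then obtain N where N: "\<forall>n\<ge>N. dist (f n) x < e"
    using metric_LIMSEQ_D[OF lim] by blast
  have tail: "f n \<in> U0" if "n \<ge> N" for n
  proof -
    have "\<bar>f n - x\<bar> < e" using N that by (simp add: dist_real_def)
    then have "f n \<in> {x..<x+e}" using above[of n] by simp
    with e show ?thesis by blast
  qed
  have "\<forall>n. \<exists>V\<in>\<U>. f n \<in> V" using \<U> by blast
  then obtain V where V: "\<And>n. V n \<in> \<U>" "\<And>n. f n \<in> V n" by metis
  have "insert x (range f) \<subseteq> \<Union>(insert U0 (V ` {..<N}))"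
  proof
    fix z assume "z \<in> insert x (range f)"
    then consider "z = x" | n where "z = f n" "n < N" | n where "z = f n" "N \<le> n"
      using not_le by blast
    then show "z \<in> \<Union>(insert U0 (V ` {..<N}))"
    proof cases
      case 1
      with U0 show ?thesis by blast
    next
      case (2 n)
      with V(2)[of n] show ?thesis by blast
    next
      case (3 n)
      with tail[of n] show ?thesis by blast
    qed
  qed
  moreover have "insert U0 (V ` {..<N}) \<subseteq> \<U>" using U0 V by blast
  ultimately show "\<exists>\<F>. finite \<F> \<and> \<F> \<subseteq> \<U> \<and> insert x (range f) \<subseteq> \<Union>\<F>"
    by (intro exI[of _ "insert U0 (V ` {..<N})"]) simp
qed simp

lemma downward_directed_finite_lower_bound:
  assumes "D \<noteq> {}" "\<And>A B. A \<in> D \<Longrightarrow> B \<in> D \<Longrightarrow> \<exists>C\<in>D. C \<subseteq> A \<inter> B"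
    and "finite F" "F \<subseteq> D"
  shows "\<exists>C\<in>D. C \<subseteq> \<Inter>F"
  using assms(3,4)
proof (induction F rule: finite_induct)
  case empty
  then show ?case using assms(1) by blast
next
  case (insert A F)
  then obtain C where "C \<in> D" "C \<subseteq> \<Inter>F" by blast
  moreover obtain C' where "C' \<in> D" "C' \<subseteq> A \<inter> C"
    using assms(2)[of A C] insert.prems \<open>C \<in> D\<close> by blast
  ultimately show ?case by (intro bexI[of _ C']) auto
qed

lemma Hausdorff_space_directed_compact_subset_openin:
  assumes X: "Hausdorff_space X" and W: "openin X W"
    and D: "D \<noteq> {}" "\<And>K. K \<in> D \<Longrightarrow> compactin X K"
      "\<And>A B. A \<in> D \<Longrightarrow> B \<in> D \<Longrightarrow> \<exists>C\<in>D. C \<subseteq> A \<inter> B"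
    and "\<Inter>D \<subseteq> W"
  shows "\<exists>K\<in>D. K \<subseteq> W"
proof -
  obtain K0 where K0: "K0 \<in> D" using D(1) by blast
  have "compactin X (K0 - W)"
    by (rule closed_compactin[OF D(2)[OF K0] Diff_subset
          closedin_diff[OF compactin_imp_closedin[OF X D(2)[OF K0]] W]])
  then have fip: "\<And>\<C>. \<forall>C\<in>\<C>. closedin X C \<Longrightarrow>
      \<forall>\<F>. finite \<F> \<and> \<F> \<subseteq> \<C> \<longrightarrow> (K0 - W) \<inter> \<Inter>\<F> \<noteq> {} \<Longrightarrow> (K0 - W) \<inter> \<Inter>\<C> \<noteq> {}"
    unfolding compactin_fip by blast
  have "\<forall>C\<in>D. closedin X C" using D(2) X compactin_imp_closedin by blast
  moreover have "(K0 - W) \<inter> \<Inter>D = {}" using \<open>\<Inter>D \<subseteq> W\<close> by blast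
  ultimately obtain F where F: "finite F" "F \<subseteq> D" "(K0 - W) \<inter> \<Inter>F = {}"
    using fip[of D] by blast
  then obtain C where "C \<in> D" "C \<subseteq> \<Inter>(insert K0 F)"
    using downward_directed_finite_lower_bound[OF D(1,3), of "insert K0 F"] K0 by auto
  then have "C \<subseteq> K0" "C \<subseteq> \<Inter>F" by auto
  with F(3) have "C \<subseteq> W" by blast
  with \<open>C \<in> D\<close> show ?thesis by blast
qed

lemma Q_le_eq: "Q_le = (\<supseteq>)"
  by (simp add: Q_le_def fun_eq_iff)

lemma openin_scott_topology: "openin (scott_topology P le) U \<longleftrightarrow> scott_open P le U"
  unfolding scott_topology_def by (simp add: topology_inverse'[OF istopology_scott_open])

lemma is_lub_in_Inter: "\<Inter>D \<in> P \<Longrightarrow> is_lub_in P (\<supseteq>) D (\<Inter>D)"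
  unfolding is_lub_in_def by blast

lemma directed_in_decseq:
  assumes "range L \<subseteq> P" "decseq L"
  shows "directed_in P (\<supseteq>) (range L)"
  unfolding directed_in_def
proof (intro conjI ballI)
  fix A B assume "A \<in> range L" "B \<in> range L"
  with \<open>decseq L\<close> obtain m n where "A = L m" "B = L n" "L (max m n) \<subseteq> L m" "L (max m n) \<subseteq> L n"
    by (metis decseqD max.cobounded1 max.cobounded2 rangeE)
  then show "\<exists>C\<in>range L. A \<supseteq> C \<and> B \<supseteq> C" by blast
qed (use assms in auto)

lemma scott_open_compact_subsets_of_openin:
  fixes X :: "'a topology"
  defines "P \<equiv> {K. K \<noteq> {} \<and> compactin X K}"
  assumes X: "Hausdorff_space X" and W: "openin X W"
  shows "scott_open P (\<supseteq>) {K\<in>P. K \<subseteq> W}"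
  unfolding scott_open_def
proof (intro conjI allI impI ballI)
  fix D S assume asm: "directed_in P (\<supseteq>) D \<and> is_lub_in P (\<supseteq>) D S \<and> S \<in> {K\<in>P. K \<subseteq> W}"
  then have D: "D \<subseteq> P" "D \<noteq> {}" "\<And>A B. A \<in> D \<Longrightarrow> B \<in> D \<Longrightarrow> \<exists>C\<in>D. C \<subseteq> A \<inter> B"
    unfolding directed_in_def by auto
  have "S \<subseteq> W" using asm by auto
  have lub: "K \<subseteq> S" if "K \<in> P" "\<forall>A\<in>D. K \<subseteq> A" for K
    using asm that unfolding is_lub_in_def by auto
  have "\<Inter>D \<subseteq> W"
  proof
    fix x assume x: "x \<in> \<Inter>D"
    obtain K where "K \<in> D" using D(2) by blast
    with x D(1) have "x \<in> K" "compactin X K" unfolding P_def by auto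
    then have "x \<in> topspace X" using compactin_subset_topspace by blast
    then have "{x} \<subseteq> S" using lub[of "{x}"] x unfolding P_def by simp
    with \<open>S \<subseteq> W\<close> show "x \<in> W" by blast
  qed
  moreover have "\<And>K. K \<in> D \<Longrightarrow> compactin X K" using D(1) unfolding P_def by blast
  ultimately obtain K where "K \<in> D" "K \<subseteq> W"
    using Hausdorff_space_directed_compact_subset_openin[OF X W D(2) _ D(3)] by blast
  with D(1) show "D \<inter> {K\<in>P. K \<subseteq> W} \<noteq> {}" by blast
qed auto

lemma scott_open_QRl_contains_tail:
  fixes f :: "nat \<Rightarrow> real"
  assumes U: "scott_open QRl Q_le U" "{x} \<in> U"
    and f: "f \<longlonglongrightarrow> x" "\<And>n. x \<le> f n" "inj f"
  shows "\<exists>n. insert x (range (\<lambda>k. f (k + n))) \<in> U"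
proof -
  define T where "T n = insert x (range (\<lambda>k. f (k + n)))" for n
  have "compactin sorgenfrey (T n)" for n
    unfolding T_def by (intro compactin_sorgenfrey_convergent_from_right LIMSEQ_ignore_initial_segment f)
  then have "range T \<subseteq> QRl" unfolding QRl_def T_def by auto
  moreover have "decseq T"
  proof (rule decseq_SucI)
    fix n
    have "f (k + Suc n) \<in> range (\<lambda>k. f (k + n))" for k
      using rangeI[of "\<lambda>k. f (k + n)" "Suc k"] by simp
    then show "T (Suc n) \<subseteq> T n" unfolding T_def by blast
  qed
  moreover have "\<Inter>(range T) = {x}"
  proof -
    have "z = x" if z: "\<forall>n. z \<in> T n" for z
    proof (rule ccontr)
      assume "z \<noteq> x"
      with z[rule_format, of 0] obtain j where "z = f j" unfolding T_def by auto
      moreover from \<open>z \<noteq> x\<close> z[rule_format, of "Suc j"] obtain k where "z = f (k + Suc j)"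
        unfolding T_def by auto
      ultimately show False using \<open>inj f\<close> by (simp add: inj_eq)
    qed
    then show ?thesis unfolding T_def by auto
  qed
  moreover have "{x} \<in> QRl" unfolding QRl_def by simp
  ultimately have "directed_in QRl Q_le (range T)" "is_lub_in QRl Q_le (range T) {x}"
    unfolding Q_le_eq using directed_in_decseq is_lub_in_Inter by metis+
  with U have "range T \<inter> U \<noteq> {}" unfolding scott_open_def by blast
  then show ?thesis unfolding T_def by blast
qed

lemma open_way_below_QRl_avoids_point:
  assumes U: "open_way_below (scott_topology QRl Q_le) U QRl" and "b < a"
  shows "\<exists>t\<in>{b<..<a}. \<forall>K\<in>U. t \<notin> K"
proof -
  define Box where "Box t = {K\<in>QRl. K \<subseteq> - {t..<a}}" for t
  have way_below: "\<And>\<D>. \<D> \<noteq> {} \<Longrightarrow> \<forall>W\<in>\<D>. openin (scott_topology QRl Q_le) W \<Longrightarrow>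
      \<forall>A\<in>\<D>. \<forall>B\<in>\<D>. \<exists>C\<in>\<D>. A \<union> B \<subseteq> C \<Longrightarrow> QRl \<subseteq> \<Union>\<D> \<Longrightarrow> \<exists>W\<in>\<D>. U \<subseteq> W"
    using U unfolding open_way_below_def by blast
  have "Box ` {b<..<a} \<noteq> {}" using \<open>b < a\<close> by simp
  moreover have "\<forall>W\<in>Box ` {b<..<a}. openin (scott_topology QRl Q_le) W"
  proof
    fix W assume "W \<in> Box ` {b<..<a}"
    then obtain t where "W = Box t" by blast
    have "openin sorgenfrey (- {t..<a})"
      using closedin_sorgenfrey_atLeastLessThan by (simp add: closedin_def Compl_eq_Diff_UNIV)
    then show "openin (scott_topology QRl Q_le) W"
      unfolding \<open>W = Box t\<close> openin_scott_topology Box_def Q_le_eq QRl_def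
      by (intro scott_open_compact_subsets_of_openin Hausdorff_space_sorgenfrey)
  qed
  moreover have "\<forall>A\<in>Box ` {b<..<a}. \<forall>B\<in>Box ` {b<..<a}. \<exists>C\<in>Box ` {b<..<a}. A \<union> B \<subseteq> C"
  proof (intro ballI)
    fix A B assume "A \<in> Box ` {b<..<a}" "B \<in> Box ` {b<..<a}"
    then obtain s t where st: "s \<in> {b<..<a}" "t \<in> {b<..<a}" "A = Box s" "B = Box t" by blast
    have "{max s t..<a} \<subseteq> {s..<a} \<inter> {t..<a}" by auto
    then have "A \<union> B \<subseteq> Box (max s t)" unfolding st Box_def by blast
    moreover have "max s t \<in> {b<..<a}" using st by (auto simp: max_def)
    ultimately show "\<exists>C\<in>Box ` {b<..<a}. A \<union> B \<subseteq> C" by blast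
  qed
  moreover have "QRl \<subseteq> \<Union>(Box ` {b<..<a})"
  proof
    fix K assume "K \<in> QRl"
    then obtain t where "t \<in> {b<..<a}" "K \<inter> {t..<a} = {}"
      using compactin_sorgenfrey_disjoint_left_of \<open>b < a\<close> unfolding QRl_def by blast
    with \<open>K \<in> QRl\<close> show "K \<in> \<Union>(Box ` {b<..<a})" unfolding Box_def by blast
  qed
  ultimately have "\<exists>W\<in>Box ` {b<..<a}. U \<subseteq> W" by (rule way_below)
  then obtain t where t: "t \<in> {b<..<a}" "U \<subseteq> Box t" by blast
  have "t \<notin> K" if "K \<in> U" for K
  proof
    assume "t \<in> K"
    from that t(2) have "K \<subseteq> - {t..<a}" unfolding Box_def by blast
    with \<open>t \<in> K\<close> t(1) show False by auto
  qed
  with t(1) show ?thesis by blast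
qed

lemma open_way_below_QRl_avoiding_null_sequence:
  assumes U: "open_way_below (scott_topology QRl Q_le) U QRl"
  obtains y :: "nat \<Rightarrow> real"
  where "y \<longlonglongrightarrow> 0" "\<And>k. 0 \<le> y k" "inj y" "\<And>k K. K \<in> U \<Longrightarrow> y k \<notin> K"
proof -
  have "\<exists>t\<in>{inverse (Suc (Suc k))<..<inverse (Suc k)}. \<forall>K\<in>U. t \<notin> K" for k
    by (rule open_way_below_QRl_avoids_point[OF U]) simp
  then obtain y where y: "\<And>k. y k \<in> {inverse (Suc (Suc k))<..<inverse (Suc k)}"
    and avoid: "\<And>k K. K \<in> U \<Longrightarrow> y k \<notin> K"
    by metis
  have pos: "0 \<le> y k" for k
  proof -
    have "0 < inverse (real (Suc (Suc k)))" by simp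
    with y[of k] show ?thesis by (simp only: greaterThanLessThan_iff) linarith
  qed
  have "y n < y m" if "m < n" for m n
  proof -
    have "inverse (real (Suc n)) \<le> inverse (real (Suc (Suc m)))"
      using that by (intro le_imp_inverse_le) auto
    with y[of m] y[of n] show ?thesis by (simp only: greaterThanLessThan_iff) linarith
  qed
  then have "inj y" by (metis linorder_injI less_irrefl)
  moreover have "y \<longlonglongrightarrow> 0"
  proof (rule tendsto_sandwich[OF _ _ tendsto_const LIMSEQ_inverse_real_of_nat])
    show "\<forall>\<^sub>F k in sequentially. y k \<le> inverse (real (Suc k))"
      using y by (simp add: less_imp_le del: of_nat_Suc)
  qed (simp add: pos)
  ultimately show ?thesis using that pos avoid by blast
qed

theorem proposition4p22:
  shows "\<not> core_compact (scott_topology QRl Q_le)"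
proof
  let ?X = "scott_topology QRl Q_le"
  assume "core_compact ?X"
  moreover have "openin ?X QRl"
    unfolding openin_scott_topology scott_open_def directed_in_def by blast
  moreover have "{0} \<in> QRl" unfolding QRl_def by simp
  ultimately obtain U where U: "open_way_below ?X U QRl" "{0} \<in> U"
    unfolding core_compact_def by blast
  then have "scott_open QRl Q_le U"
    unfolding open_way_below_def openin_scott_topology by blast
  obtain y where y: "y \<longlonglongrightarrow> 0" "\<And>k. 0 \<le> y k" "inj y"
    and avoid: "\<And>k K. K \<in> U \<Longrightarrow> y k \<notin> K"
    using open_way_below_QRl_avoiding_null_sequence[OF U(1)] by blast
  then obtain n where "insert 0 (range (\<lambda>k. y (k + n))) \<in> U"
    using scott_open_QRl_contains_tail[OF \<open>scott_open QRl Q_le U\<close> U(2)] by blast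
  moreover have "y n \<in> insert 0 (range (\<lambda>k. y (k + n)))"
    using rangeI[of "\<lambda>k. y (k + n)" 0] by simp
  ultimately show False using avoid by blast
qed

end
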